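(* Suppose $F$ is symmetric around $1/2$, i.e., $F(y)=1-F(1-y)$ for all $y\in[0,1]$, and $|M|\ge4$. Then there exists $x\in(0,1/2)$ such that the strategy $\sigma_{\mathrm{ex}}(x)$ described below is a symmetric Bayesian Nash equilibrium strategy of the coordination game with two rounds of communication. Strategy $\sigma_{\mathrm{ex}}(x)$, using designated distinct messages $e,m_L,m_R$ and four further messages for a random bit (any other message is interpreted as a fixed designated message): Round 1: a type $u$ sends $e$ if $u\le x$ or $u>1-x$; $m_L$ if $x<u\le1/2$; $m_R$ if $1/2<u\le1-x$. After round-1 pair $(m_L,m_L)$: both play $L$. After $(m_R,m_R)$: both play $R$. After $(m_L,m_R)$ (either order): in round 2 each player sends an independent uniformly random bit, and both play $L$ if the bits differ and $R$ if they are equal. After $(e,m_L)$ or $(e,m_R)$ (either order): in round 2 the $e$-sender sends $m_L$ if her type is $\le1/2$ and $m_R$ otherwise, while the moderate sender repeats her round-1 message; the $e$-sender then plays $L$ iff her type is $\le1/2$, and the $m_L$-sender (resp. $m_R$-sender) plays $L$ iff the $e$-sender's round-2 message is $m_L$ (resp. plays $R$ iff it is $m_R$), so that both coordinate on the $e$-sender's preferred action. After $(e,e)$: round-2 messages are irrelevant and each player plays $L$ iff her type is $\le1/2$.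
   Context: Two players; types drawn independently from a distribution on $[0,1]$ with continuous CDF $F$ and density $f>0$ on $[0,1]$. Each chooses $L$ or $R$; a player of type $u$ gets $1-u$ if both choose $L$, $u$ if both choose $R$, and $0$ otherwise. Coordination game with two rounds of communication: after learning types, players simultaneously send publicly observed costless messages from a finite set $M$ in round 1, observe them, then simultaneously send messages from $M$ in round 2 (which may depend on own type and round-1 messages), observe them, and then choose actions (which may depend on own type and all messages). A symmetric strategy is a Bayesian Nash equilibrium strategy if, when the opponent uses it, no type of a player can obtain a strictly higher expected payoff by any other (message and action) behavior. *)

theory Defs
  imports "HOL-Probability.Probability"
begin

text \<open>Actions: True = L, False = R.  Payoff of a type u given own and opponent action.\<close>
definition coord_payoff :: "real \<Rightarrow> bool \<Rightarrow> bool \<Rightarrow> real" where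
  "coord_payoff u a b = (if a \<and> b then 1 - u else if \<not> a \<and> \<not> b then u else 0)"

text \<open>Behaviour of a player (of a given type): a (possibly mixed) round-1 message;
  a (possibly mixed) round-2 message depending on (own round-1, opponent round-1);
  a (possibly mixed) action depending on (own r1, opp r1, own r2, opp r2).\<close>
type_synonym 'm behavior =
  "'m pmf \<times> ('m \<Rightarrow> 'm \<Rightarrow> 'm pmf) \<times> ('m \<Rightarrow> 'm \<Rightarrow> 'm \<Rightarrow> 'm \<Rightarrow> bool pmf)"

definition outcome :: "'m behavior \<Rightarrow> 'm behavior \<Rightarrow> (bool \<times> bool) pmf" where
  "outcome b c =
     bind_pmf (fst b) (\<lambda>m1. bind_pmf (fst c) (\<lambda>n1.
     bind_pmf (fst (snd b) m1 n1) (\<lambda>m2. bind_pmf (fst (snd c) n1 m1) (\<lambda>n2.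
     bind_pmf (snd (snd b) m1 n1 m2 n2) (\<lambda>a. bind_pmf (snd (snd c) n1 m1 n2 m2) (\<lambda>a'.
     return_pmf (a, a')))))))"

definition pair_payoff :: "real \<Rightarrow> 'm behavior \<Rightarrow> 'm behavior \<Rightarrow> real" where
  "pair_payoff u b c = measure_pmf.expectation (outcome b c) (\<lambda>(a, a'). coord_payoff u a a')"

definition exp_payoff :: "(real \<Rightarrow> real) \<Rightarrow> real \<Rightarrow> 'm behavior \<Rightarrow> (real \<Rightarrow> 'm behavior) \<Rightarrow> real" where
  "exp_payoff f u b strat = (LINT v:{0..1}|lborel. f v * pair_payoff u b (strat v))"

definition sym_BNE :: "(real \<Rightarrow> real) \<Rightarrow> (real \<Rightarrow> 'm behavior) \<Rightarrow> bool" where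
  "sym_BNE f strat \<longleftrightarrow>
     (\<forall>u\<in>{0..1}. \<forall>b. exp_payoff f u b strat \<le> exp_payoff f u (strat u) strat)"

definition cdf_of :: "(real \<Rightarrow> real) \<Rightarrow> real \<Rightarrow> real" where
  "cdf_of f y = (LINT v:{0..y}|lborel. f v)"

text \<open>Round-1 messages other than mL, mR are read as e;
  in round 2 after a mixed (e, moderate) history, any message other than mR is read as mL;
  a bit message other than b1 is read as bit 0.\<close>
definition interp1 :: "'m \<Rightarrow> 'm \<Rightarrow> 'm \<Rightarrow> 'm \<Rightarrow> 'm" where
  "interp1 e mL mR m = (if m = mL then mL else if m = mR then mR else e)"

definition sigma_ex :: "'m \<Rightarrow> 'm \<Rightarrow> 'm \<Rightarrow> 'm \<Rightarrow> 'm \<Rightarrow> real \<Rightarrow> real \<Rightarrow> 'm behavior" where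
  "sigma_ex e mL mR b0 b1 x u =
    (return_pmf (if u \<le> x \<or> u > 1 - x then e else if u \<le> 1/2 then mL else mR),
     (\<lambda>o1 p1. let o' = interp1 e mL mR o1; p' = interp1 e mL mR p1 in
        if o' \<noteq> e \<and> p' \<noteq> e \<and> o' \<noteq> p' then pmf_of_set {b0, b1}
        else if o' = e \<and> p' \<noteq> e then return_pmf (if u \<le> 1/2 then mL else mR)
        else return_pmf o'),
     (\<lambda>o1 p1 o2 p2. let o' = interp1 e mL mR o1; p' = interp1 e mL mR p1 in
        return_pmf
         (if o' = e then u \<le> 1/2
          else if p' = e then p2 \<noteq> mR
          else if o' = p' then o' = mL
          else ((o2 = b1) \<noteq> (p2 = b1)))))"

end

theory Submission
  imports Defs
begin

text \<open>
  Choose x with F(x) = 1/2 - x, by the intermediate value theorem for F(y) + y. By symmetry the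
  type classes [0,x], (x,1/2], (1/2,1-x], (1-x,1], on which the strategy is constant, then have
  probabilities 1/2 - x, x, x, 1/2 - x. Whatever a type u does after her round-1 message, that
  message earns at most 1/2 + x/2 - x u if it is mL (the opponent plays L, except after the
  lottery, which coordinates with probability 1/2), 1/2 - x/2 + x u if it is mR, and
  (1/2 + x) max u (1 - u) if it is read as e (moderates follow her, extremists play their own
  preference). The strategy earns the largest of the three, because its thresholds x, 1/2 and
  1 - x are exactly where these values cross.
\<close>

lemma expectation_bind_pmf_finite:
  fixes p :: "'a::finite pmf" and g :: "'a \<Rightarrow> 'b::finite pmf" and h :: "'b \<Rightarrow> real"
  shows "measure_pmf.expectation (bind_pmf p g) h =
         measure_pmf.expectation p (\<lambda>a. measure_pmf.expectation (g a) h)"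
  by (subst pmf_expectation_bind[of UNIV], simp_all)
     (subst (2) integral_measure_pmf[of UNIV], auto simp: mult.commute)

lemma expectation_le_const_finite:
  fixes p :: "'a::finite pmf" and g :: "'a \<Rightarrow> real"
  assumes "\<And>a. g a \<le> C"
  shows "measure_pmf.expectation p g \<le> C"
  by (rule measure_pmf.integral_le_const) (auto simp: assms integrable_measure_pmf_finite)

lemma expectation_add_finite:
  fixes p :: "'a::finite pmf" and g h :: "'a \<Rightarrow> real"
  shows "measure_pmf.expectation p g + measure_pmf.expectation p h =
         measure_pmf.expectation p (\<lambda>a. g a + h a)"
  by (simp add: integrable_measure_pmf_finite)

lemma coord_payoff_le:
  assumes "0 \<le> u" "u \<le> 1"
  shows "coord_payoff u a t \<le> (if t then 1 - u else u)"
  using assms by (auto simp: coord_payoff_def)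

lemma coord_payoff_le_max:
  assumes "0 \<le> u" "u \<le> 1"
  shows "coord_payoff u a t \<le> max u (1 - u)"
  using assms by (auto simp: coord_payoff_def)

lemma pair_payoff_le_max:
  fixes b c :: "'m::finite behavior"
  assumes "0 \<le> u" "u \<le> 1"
  shows "pair_payoff u b c \<le> max u (1 - u)"
  unfolding pair_payoff_def
  by (rule expectation_le_const_finite) (auto simp: coord_payoff_le_max[OF assms])

lemma pair_payoff_mixed_first_message:
  fixes p1 :: "'m::finite pmf"
  shows "pair_payoff u (p1, b2, b3) c =
         measure_pmf.expectation p1 (\<lambda>m. pair_payoff u (return_pmf m, b2, b3) c)"
  unfolding pair_payoff_def outcome_def by (simp add: expectation_bind_pmf_finite)

lemma pair_payoff_pure_first_messages:
  fixes b2 :: "'m::finite \<Rightarrow> 'm \<Rightarrow> 'm pmf"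
  assumes "fst c = return_pmf n"
  shows "pair_payoff u (return_pmf m, b2, b3) c =
    measure_pmf.expectation (b2 m n) (\<lambda>m2.
    measure_pmf.expectation (fst (snd c) n m) (\<lambda>n2.
    measure_pmf.expectation (b3 m n m2 n2) (\<lambda>a.
    measure_pmf.expectation (snd (snd c) n m n2 m2) (\<lambda>a'. coord_payoff u a a'))))"
  using assms unfolding pair_payoff_def outcome_def by (simp add: expectation_bind_pmf_finite)

lemma pair_payoff_le_opponent_action:
  fixes b2 :: "'m::finite \<Rightarrow> 'm \<Rightarrow> 'm pmf"
  assumes "0 \<le> u" "u \<le> 1" "fst c = return_pmf n"
    and "\<And>m2 n2. snd (snd c) n m n2 m2 = return_pmf t"
  shows "pair_payoff u (return_pmf m, b2, b3) c \<le> (if t then 1 - u else u)"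
  unfolding pair_payoff_pure_first_messages[OF assms(3)] assms(4) expectation_return_pmf
  by (intro expectation_le_const_finite coord_payoff_le[OF assms(1,2)])

lemma pair_payoff_le_coin:
  fixes b2 :: "'m::finite \<Rightarrow> 'm \<Rightarrow> 'm pmf"
  assumes "0 \<le> u" "u \<le> 1" "b0 \<noteq> b1" "fst c = return_pmf n"
    and "fst (snd c) n m = pmf_of_set {b0, b1}"
    and "\<And>m2 n2. snd (snd c) n m n2 m2 = return_pmf ((n2 = b1) \<noteq> (m2 = b1))"
  shows "pair_payoff u (return_pmf m, b2, b3) c \<le> 1/2"
proof -
  have bound: "measure_pmf.expectation q (\<lambda>a. coord_payoff u a t) \<le> (if t then 1 - u else u)"
    for q :: "bool pmf" and t
    by (intro expectation_le_const_finite coord_payoff_le[OF assms(1,2)])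
  have "measure_pmf.expectation (pmf_of_set {b0, b1}) (\<lambda>n2.
          measure_pmf.expectation (b3 m n m2 n2) (\<lambda>a. coord_payoff u a ((n2 = b1) \<noteq> (m2 = b1))))
        \<le> 1/2" for m2
    using bound[of "b3 m n m2 b0" "m2 = b1"] bound[of "b3 m n m2 b1" "m2 \<noteq> b1"] assms(3)
    by (cases "m2 = b1") (simp_all add: integral_pmf_of_set)
  then show ?thesis
    unfolding pair_payoff_pure_first_messages[OF assms(4)] assms(5,6) expectation_return_pmf
    by (rule expectation_le_const_finite)
qed

lemma pair_payoff_le_opposite_actions:
  fixes b2 :: "'m::finite \<Rightarrow> 'm \<Rightarrow> 'm pmf"
  assumes "0 \<le> u" "u \<le> 1" "fst c = return_pmf n" "fst c' = return_pmf n"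
    and "fst (snd c) n m = fst (snd c') n m"
    and "\<And>m2 n2. snd (snd c) n m n2 m2 = return_pmf True"
    and "\<And>m2 n2. snd (snd c') n m n2 m2 = return_pmf False"
  shows "pair_payoff u (return_pmf m, b2, b3) c + pair_payoff u (return_pmf m, b2, b3) c'
         \<le> max u (1 - u)"
  unfolding pair_payoff_pure_first_messages[OF assms(3)] pair_payoff_pure_first_messages[OF assms(4)]
    assms(5-7)
  using assms(1,2)
  by (simp only: expectation_add_finite expectation_return_pmf)
     (intro expectation_le_const_finite, auto simp: coord_payoff_def)

lemma cdf_of_0: "cdf_of f 0 = 0"
proof -
  have "AE v in lborel. indicator {0::real} v *\<^sub>R f v = 0"
    using AE_lborel_singleton[of 0] by eventually_elim (auto simp: indicator_def)
  then show ?thesis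
    by (simp add: cdf_of_def set_lebesgue_integral_def integral_eq_zero_AE)
qed

lemma continuous_on_cdf_of:
  assumes "set_integrable lborel {0..1} f"
  shows "continuous_on {0..1} (cdf_of f)"
proof -
  have "cdf_of f y = integral {0..y} f" if "y \<in> {0..1}" for y
    unfolding cdf_of_def
    by (rule set_borel_integral_eq_integral(2), rule set_integrable_subset[OF assms])
       (use that in auto)
  then show ?thesis
    using indefinite_integral_continuous_1[OF set_borel_integral_eq_integral(1)[OF assms]]
      continuous_on_cong[OF refl] by metis
qed

lemma cdf_of_eq_half_minus:
  assumes "set_integrable lborel {0..1} f" "cdf_of f (1/2) = 1/2"
  obtains x where "x \<in> {0<..<1/2}" "cdf_of f x = 1/2 - x"
proof -
  have "continuous_on {0..1/2} (\<lambda>y. cdf_of f y + y)"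
    by (intro continuous_intros continuous_on_subset[OF continuous_on_cdf_of[OF assms(1)]]) auto
  then obtain x where x: "0 \<le> x" "x \<le> 1/2" "cdf_of f x + x = 1/2"
    using IVT'[of "\<lambda>y. cdf_of f y + y" 0 "1/2" "1/2"] cdf_of_0 assms(2) by auto
  moreover have "x \<noteq> 0"
    using x cdf_of_0[of f] by auto
  moreover have "x \<noteq> 1/2"
    using x assms(2) by (cases "x = 1/2") auto
  ultimately show ?thesis
    using that[of x] by auto
qed

lemma set_integral_indicator_atMost:
  assumes "set_integrable lborel {0..1} f" "0 \<le> t" "t \<le> 1"
  shows "set_integrable lborel {0..1} (\<lambda>v. f v * indicator {..t} v)"
    and "(LINT v:{0..1}|lborel. f v * indicator {..t} v) = cdf_of f t"
proof -
  have restrict: "indicator {0..1} v *\<^sub>R (f v * indicator {..t} v) = indicator {0..t} v *\<^sub>R f v"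
    for v :: real
    using assms(2,3) by (auto simp: indicator_def)
  have "set_integrable lborel {0..t} f"
    by (rule set_integrable_subset[OF assms(1)]) (use assms in auto)
  then show "set_integrable lborel {0..1} (\<lambda>v. f v * indicator {..t} v)"
    unfolding set_integrable_def restrict .
  show "(LINT v:{0..1}|lborel. f v * indicator {..t} v) = cdf_of f t"
    unfolding set_lebesgue_integral_def cdf_of_def restrict ..
qed

lemma set_integral_step_function:
  fixes f g :: "real \<Rightarrow> real"
  assumes f: "set_integrable lborel {0..1} f"
    and abc: "0 \<le> a" "a \<le> b" "b \<le> c" "c \<le> 1"
    and g: "\<And>v. g v = (if v \<le> a then g1 else if v \<le> b then g2 else if v \<le> c then g3 else g4)"
  shows "(LINT v:{0..1}|lborel. f v * g v) =
     g1 * cdf_of f a + g2 * (cdf_of f b - cdf_of f a) + g3 * (cdf_of f c - cdf_of f b)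
     + g4 * (cdf_of f 1 - cdf_of f c)"
proof -
  have "(LINT v:{0..1}|lborel. f v * g v) = (LINT v:{0..1}|lborel.
      g4 * f v + ((g3 - g4) * (f v * indicator {..c} v) + ((g2 - g3) * (f v * indicator {..b} v)
       + (g1 - g2) * (f v * indicator {..a} v))))"
    using abc by (intro set_lebesgue_integral_cong) (auto simp: g indicator_def algebra_simps)
  also have "\<dots> = g4 * cdf_of f 1 + ((g3 - g4) * cdf_of f c + ((g2 - g3) * cdf_of f b
       + (g1 - g2) * cdf_of f a))"
    using abc by (simp add: set_integral_indicator_atMost[OF f] f cdf_of_def)
  finally show ?thesis
    by (simp add: algebra_simps)
qed

text \<open>Expectation over the opponent's type when F(x) = 1/2 - x and F is symmetric, for a
  function of the type that is constant on the classes represented by 0, 1/2, 1 - x and 1.\<close>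
definition class_average :: "real \<Rightarrow> (real \<Rightarrow> real) \<Rightarrow> real" where
  "class_average x g = (1/2 - x) * (g 0 + g 1) + x * (g (1/2) + g (1 - x))"

lemma class_average_le:
  assumes "0 \<le> x" "x \<le> 1/2" "g 0 + g 1 \<le> A" "g (1/2) + g (1 - x) \<le> B"
  shows "class_average x g \<le> (1/2 - x) * A + x * B"
  unfolding class_average_def using assms by (intro add_mono mult_left_mono) auto

lemma class_average_expectation:
  fixes p :: "'a::finite pmf"
  shows "class_average x (\<lambda>v. measure_pmf.expectation p (g v)) =
         measure_pmf.expectation p (\<lambda>m. class_average x (\<lambda>v. g v m))"
  by (simp add: class_average_def integrable_measure_pmf_finite algebra_simps)

locale sigma_ex_setup =
  fixes e mL mR b0 b1 :: "'m::finite" and x :: real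
  assumes messages_distinct: "distinct [e, mL, mR]" and bits_distinct: "b0 \<noteq> b1"
    and x_pos: "0 < x" and x_less_half: "x < 1/2"
begin

abbreviation \<sigma> :: "real \<Rightarrow> 'm behavior" where
  "\<sigma> \<equiv> sigma_ex e mL mR b0 b1 x"

lemma messages_neq: "e \<noteq> mL" "e \<noteq> mR" "mL \<noteq> mR" "mL \<noteq> e" "mR \<noteq> e" "mR \<noteq> mL"
  using messages_distinct by auto

lemmas sigma_ex_simps =
  sigma_ex_def interp1_def Let_def messages_neq bits_distinct

lemma sigma_ex_step:
  "\<sigma> v = (if v \<le> x then \<sigma> 0 else if v \<le> 1/2 then \<sigma> (1/2)
          else if v \<le> 1 - x then \<sigma> (1 - x) else \<sigma> 1)"
  using x_pos x_less_half by (auto simp: sigma_ex_def Let_def cong: if_cong)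

lemma sigma_ex_first_message:
  "fst (\<sigma> 0) = return_pmf e" "fst (\<sigma> (1/2)) = return_pmf mL"
  "fst (\<sigma> (1 - x)) = return_pmf mR" "fst (\<sigma> 1) = return_pmf e"
  using x_pos x_less_half by (simp_all add: sigma_ex_def)

lemma exp_payoff_sigma_ex:
  assumes "set_integrable lborel {0..1} f" and "cdf_of f x = 1/2 - x"
    and "cdf_of f (1/2) = 1/2" "cdf_of f (1 - x) = 1/2 + x" "cdf_of f 1 = 1"
  shows "exp_payoff f u b \<sigma> = class_average x (\<lambda>v. pair_payoff u b (\<sigma> v))"
proof -
  have step: "pair_payoff u b (\<sigma> v) =
      (if v \<le> x then pair_payoff u b (\<sigma> 0) else if v \<le> 1/2 then pair_payoff u b (\<sigma> (1/2))
       else if v \<le> 1 - x then pair_payoff u b (\<sigma> (1 - x)) else pair_payoff u b (\<sigma> 1))" for v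
    by (subst sigma_ex_step) simp
  have "exp_payoff f u b \<sigma> =
      pair_payoff u b (\<sigma> 0) * cdf_of f x
      + pair_payoff u b (\<sigma> (1/2)) * (cdf_of f (1/2) - cdf_of f x)
      + pair_payoff u b (\<sigma> (1 - x)) * (cdf_of f (1 - x) - cdf_of f (1/2))
      + pair_payoff u b (\<sigma> 1) * (cdf_of f 1 - cdf_of f (1 - x))"
    unfolding exp_payoff_def
    by (rule set_integral_step_function[OF assms(1)]) (use x_pos x_less_half step in auto)
  then show ?thesis
    by (simp add: assms(2-5) class_average_def algebra_simps)
qed

lemma deviation_mL_le:
  assumes "0 \<le> u" "u \<le> 1"
  shows "class_average x (\<lambda>v. pair_payoff u (return_pmf mL, b2, b3) (\<sigma> v)) \<le> 1/2 + x/2 - x * u"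
proof -
  let ?P = "\<lambda>v. pair_payoff u (return_pmf mL, b2, b3) (\<sigma> v)"
  have "?P 0 \<le> 1 - u"
    by (rule pair_payoff_le_opponent_action[OF assms sigma_ex_first_message(1),
          where t = True, simplified]) (simp add: sigma_ex_simps)
  moreover have "?P (1/2) \<le> 1 - u"
    by (rule pair_payoff_le_opponent_action[OF assms sigma_ex_first_message(2),
          where t = True, simplified]) (simp add: sigma_ex_simps)
  moreover have "?P (1 - x) \<le> 1/2"
    by (rule pair_payoff_le_coin[OF assms bits_distinct sigma_ex_first_message(3)])
       (simp_all add: sigma_ex_simps)
  moreover have "?P 1 \<le> u"
    by (rule pair_payoff_le_opponent_action[OF assms sigma_ex_first_message(4),
          where t = False, simplified]) (simp add: sigma_ex_simps)
  ultimately have "class_average x ?P \<le> (1/2 - x) * 1 + x * (3/2 - u)"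
    using x_pos x_less_half by (intro class_average_le) auto
  then show ?thesis
    by (simp add: algebra_simps)
qed

lemma deviation_mR_le:
  assumes "0 \<le> u" "u \<le> 1"
  shows "class_average x (\<lambda>v. pair_payoff u (return_pmf mR, b2, b3) (\<sigma> v)) \<le> 1/2 - x/2 + x * u"
proof -
  let ?P = "\<lambda>v. pair_payoff u (return_pmf mR, b2, b3) (\<sigma> v)"
  have "?P 0 \<le> 1 - u"
    by (rule pair_payoff_le_opponent_action[OF assms sigma_ex_first_message(1),
          where t = True, simplified]) (simp add: sigma_ex_simps)
  moreover have "?P (1/2) \<le> 1/2"
    by (rule pair_payoff_le_coin[OF assms bits_distinct sigma_ex_first_message(2)])
       (simp_all add: sigma_ex_simps)
  moreover have "?P (1 - x) \<le> u"
    by (rule pair_payoff_le_opponent_action[OF assms sigma_ex_first_message(3),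
          where t = False, simplified]) (simp add: sigma_ex_simps)
  moreover have "?P 1 \<le> u"
    by (rule pair_payoff_le_opponent_action[OF assms sigma_ex_first_message(4),
          where t = False, simplified]) (simp add: sigma_ex_simps)
  ultimately have "class_average x ?P \<le> (1/2 - x) * 1 + x * (1/2 + u)"
    using x_pos x_less_half by (intro class_average_le) auto
  then show ?thesis
    by (simp add: algebra_simps)
qed

lemma deviation_e_le:
  assumes "0 \<le> u" "u \<le> 1" "m \<noteq> mL" "m \<noteq> mR"
  shows "class_average x (\<lambda>v. pair_payoff u (return_pmf m, b2, b3) (\<sigma> v))
         \<le> (1/2 + x) * max u (1 - u)"
proof -
  let ?P = "\<lambda>v. pair_payoff u (return_pmf m, b2, b3) (\<sigma> v)"
  have "?P 0 + ?P 1 \<le> max u (1 - u)"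
    by (rule pair_payoff_le_opposite_actions[OF assms(1,2) sigma_ex_first_message(1,4)])
       (use assms(3,4) in \<open>simp_all add: sigma_ex_simps\<close>)
  moreover have "?P (1/2) + ?P (1 - x) \<le> max u (1 - u) + max u (1 - u)"
    using pair_payoff_le_max[OF assms(1,2)] by (intro add_mono)
  ultimately have "class_average x ?P \<le> (1/2 - x) * max u (1 - u) + x * (2 * max u (1 - u))"
    using x_pos x_less_half by (intro class_average_le) auto
  then show ?thesis
    by (simp add: algebra_simps)
qed

lemma sigma_ex_payoff:
  assumes "0 \<le> u" "u \<le> 1"
  shows "class_average x (\<lambda>v. pair_payoff u (\<sigma> u) (\<sigma> v)) =
    (if u \<le> x then (1/2 + x) * (1 - u) else if u \<le> 1/2 then 1/2 + x/2 - x * u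
     else if u \<le> 1 - x then 1/2 - x/2 + x * u else (1/2 + x) * u)"
proof -
  have payoffs: "pair_payoff u (\<sigma> u) (\<sigma> 0) = (if u \<le> 1 - x then 1 - u else 0)"
    "pair_payoff u (\<sigma> u) (\<sigma> (1/2)) = (if u \<le> 1/2 then 1 - u else if u \<le> 1 - x then 1/2 else u)"
    "pair_payoff u (\<sigma> u) (\<sigma> (1 - x)) = (if u \<le> x then 1 - u else if u \<le> 1/2 then 1/2 else u)"
    "pair_payoff u (\<sigma> u) (\<sigma> 1) = (if u \<le> x then 0 else u)"
    using x_pos x_less_half assms
    by (simp_all add: pair_payoff_def outcome_def expectation_bind_pmf_finite integral_pmf_of_set
        sigma_ex_simps) (auto simp: coord_payoff_def)
  show ?thesis
    unfolding class_average_def payoffs using x_pos x_less_half by (auto simp: field_simps)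
qed

lemma sigma_ex_payoff_ge:
  assumes "0 \<le> u" "u \<le> 1"
  shows "(1/2 + x) * max u (1 - u) \<le> class_average x (\<lambda>v. pair_payoff u (\<sigma> u) (\<sigma> v))"
      (is "_ \<le> ?V")
    and "1/2 + x/2 - x * u \<le> class_average x (\<lambda>v. pair_payoff u (\<sigma> u) (\<sigma> v))"
    and "1/2 - x/2 + x * u \<le> class_average x (\<lambda>v. pair_payoff u (\<sigma> u) (\<sigma> v))"
proof -
  have "x * u \<le> x/2" if "u \<le> 1/2"
    using mult_left_mono[OF that, of x] x_pos by simp
  moreover have "x/2 \<le> x * u" if "1/2 \<le> u"
    using mult_left_mono[OF that, of x] x_pos by simp
  ultimately show "(1/2 + x) * max u (1 - u) \<le> ?V" "1/2 + x/2 - x * u \<le> ?V"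
    "1/2 - x/2 + x * u \<le> ?V"
    unfolding sigma_ex_payoff[OF assms] using x_less_half
    by (auto simp: max_def field_simps)
qed

lemma first_message_deviation_le:
  assumes "0 \<le> u" "u \<le> 1"
  shows "class_average x (\<lambda>v. pair_payoff u (return_pmf m, b2, b3) (\<sigma> v))
         \<le> class_average x (\<lambda>v. pair_payoff u (\<sigma> u) (\<sigma> v))"
proof -
  consider "m = mL" | "m = mR" | "m \<noteq> mL" "m \<noteq> mR" by blast
  then show ?thesis
  proof cases
    case 1
    show ?thesis
      unfolding 1 by (rule order_trans[OF deviation_mL_le[OF assms] sigma_ex_payoff_ge(2)[OF assms]])
  next
    case 2
    show ?thesis
      unfolding 2 by (rule order_trans[OF deviation_mR_le[OF assms] sigma_ex_payoff_ge(3)[OF assms]])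
  next
    case 3
    show ?thesis
      by (rule order_trans[OF deviation_e_le[OF assms 3] sigma_ex_payoff_ge(1)[OF assms]])
  qed
qed


lemma sym_BNE_sigma_ex:
  assumes "set_integrable lborel {0..1} f" "cdf_of f x = 1/2 - x"
    and "cdf_of f (1/2) = 1/2" "cdf_of f (1 - x) = 1/2 + x" "cdf_of f 1 = 1"
  shows "sym_BNE f \<sigma>"
  unfolding sym_BNE_def
proof (intro ballI allI)
  fix u :: real and b :: "'m behavior"
  assume "u \<in> {0..1}"
  then have u: "0 \<le> u" "u \<le> 1"
    by auto
  obtain p1 b2 b3 where b: "b = (p1, b2, b3)"
    by (cases b) auto
  note payoff = exp_payoff_sigma_ex[OF assms]
  have "exp_payoff f u b \<sigma> = measure_pmf.expectation p1
      (\<lambda>m. class_average x (\<lambda>v. pair_payoff u (return_pmf m, b2, b3) (\<sigma> v)))"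
    unfolding payoff b pair_payoff_mixed_first_message[of u p1] by (rule class_average_expectation)
  also have "\<dots> \<le> class_average x (\<lambda>v. pair_payoff u (\<sigma> u) (\<sigma> v))"
    by (intro expectation_le_const_finite first_message_deviation_le[OF u])
  also have "\<dots> = exp_payoff f u (\<sigma> u) \<sigma>"
    unfolding payoff ..
  finally show "exp_payoff f u b \<sigma> \<le> exp_payoff f u (\<sigma> u) \<sigma>" .
qed

end

theorem mainTheorem10:
  fixes f :: "real \<Rightarrow> real"
    and e mL mR b0 b1 :: "'m::finite"
  assumes f_meas: "f \<in> borel_measurable lborel"
    and f_pos: "\<forall>v\<in>{0..1}. f v > 0"
    and f_int: "set_integrable lborel {0..1} f"
    and f_total: "(LINT v:{0..1}|lborel. f v) = 1"
    and F_sym: "\<forall>y\<in>{0..1}. cdf_of f y = 1 - cdf_of f (1 - y)"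
    and M_card: "CARD('m) \<ge> 4"
    and distinct_msgs: "distinct [e, mL, mR]"
    and bits_distinct: "b0 \<noteq> b1"
  shows "\<exists>x\<in>{0<..<1/2}. sym_BNE f (sigma_ex e mL mR b0 b1 x)"
proof -
  have F_half: "cdf_of f (1/2) = 1/2"
    using F_sym[rule_format, of "1/2"] by simp
  obtain x where x: "x \<in> {0<..<1/2}" and F_x: "cdf_of f x = 1/2 - x"
    using cdf_of_eq_half_minus[OF f_int F_half] by blast
  interpret sigma_ex_setup e mL mR b0 b1 x
    using distinct_msgs bits_distinct x by unfold_locales auto
  have "cdf_of f (1 - x) = 1/2 + x"
    using F_sym[rule_format, of x] F_x x by simp
  moreover have "cdf_of f 1 = 1"
    using f_total by (simp add: cdf_of_def)
  ultimately have "sym_BNE f \<sigma>"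
    by (rule sym_BNE_sigma_ex[OF f_int F_x F_half])
  then show ?thesis
    using x by blast
qed

end
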